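(* Let $(T,X)$ be an unbounded M-flow, where $T$ is a Hausdorff topological group and $X$ a Hausdorff uniform space (not necessarily compact). Then $(T,X)$ is sensitive to initial conditions on $X$.
   Context: $\mathscr U_X$ is a compatible symmetric uniformity of $X$, $\varepsilon[A]=\{y:\exists a\in A,(a,y)\in\varepsilon\}$. $A\subseteq T$ is syndetic if there is compact $K\subseteq T$ with $Kt\cap A\ne\emptyset$ for all $t$. A point $x$ is a.p. if $\{t:tx\in U\}$ is syndetic for every neighborhood $U$ of $x$. The flow is topologically transitive if $\{t:V\cap tU\ne\emptyset\}\ne\emptyset$ for all nonempty open $U,V$; it is an M-flow if it is topologically transitive and its a.p. points are dense. $(T,X)$ is bounded if for every $\alpha\in\mathscr U_X$ there exist $x_0\in X$ and compact $K\subseteq T$ with $\alpha[Kx_0]=X$; otherwise it is unbounded. $(T,X)$ is sensitive to initial conditions on $X$ if there is $\varepsilon\in\mathscr U_X$ such that for every $x\in X$ and every neighborhood $U$ of $x$ there exist $y\in U$ and $t\in T$ with $(tx,ty)\notin\varepsilon$. *)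

theory Defs
  imports "HOL-Analysis.Analysis"
begin

text \<open>A flow (T,X): a topological group T (written additively, not necessarily
commutative; neutral element 0) acting jointly continuously on a space X,
with (s t) x = s (t x) rendered as act (s + t) x = act s (act t x).\<close>

definition is_flow :: "('g::topological_group_add \<Rightarrow> 'x::topological_space \<Rightarrow> 'x) \<Rightarrow> bool" where
  "is_flow act \<longleftrightarrow>
     continuous_on UNIV (\<lambda>p. act (fst p) (snd p)) \<and>
     (\<forall>x. act 0 x = x) \<and>
     (\<forall>s t x. act (s + t) x = act s (act t x))"

definition entourage :: "('x::uniform_space \<times> 'x) set \<Rightarrow> bool" where
  "entourage \<epsilon> \<longleftrightarrow> eventually (\<lambda>p. p \<in> \<epsilon>) uniformity"

definition syndetic :: "'g::topological_group_add set \<Rightarrow> bool" where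
  "syndetic A \<longleftrightarrow> (\<exists>K. compact K \<and> (\<forall>t. (\<lambda>k. k + t) ` K \<inter> A \<noteq> {}))"

definition ap_point :: "('g::topological_group_add \<Rightarrow> 'x::topological_space \<Rightarrow> 'x) \<Rightarrow> 'x \<Rightarrow> bool" where
  "ap_point act x \<longleftrightarrow> (\<forall>U. open U \<longrightarrow> x \<in> U \<longrightarrow> syndetic {t. act t x \<in> U})"

definition top_transitive :: "('g::topological_group_add \<Rightarrow> 'x::topological_space \<Rightarrow> 'x) \<Rightarrow> bool" where
  "top_transitive act \<longleftrightarrow>
     (\<forall>U V. open U \<longrightarrow> U \<noteq> {} \<longrightarrow> open V \<longrightarrow> V \<noteq> {} \<longrightarrow>
        {t. V \<inter> act t ` U \<noteq> {}} \<noteq> {})"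

definition M_flow :: "('g::topological_group_add \<Rightarrow> 'x::topological_space \<Rightarrow> 'x) \<Rightarrow> bool" where
  "M_flow act \<longleftrightarrow> top_transitive act \<and> closure {x. ap_point act x} = UNIV"

definition bounded_flow :: "('g::topological_group_add \<Rightarrow> 'x::uniform_space \<Rightarrow> 'x) \<Rightarrow> bool" where
  "bounded_flow act \<longleftrightarrow>
     (\<forall>\<alpha>. entourage \<alpha> \<longrightarrow>
        (\<exists>x0 K. compact K \<and> \<alpha> `` ((\<lambda>k. act k x0) ` K) = UNIV))"

definition sensitive :: "('g::topological_group_add \<Rightarrow> 'x::uniform_space \<Rightarrow> 'x) \<Rightarrow> bool" where
  "sensitive act \<longleftrightarrow>
     (\<exists>\<epsilon>. entourage \<epsilon> \<and>
        (\<forall>x U. open U \<longrightarrow> x \<in> U \<longrightarrow> (\<exists>y\<in>U. \<exists>t. (act t x, act t y) \<notin> \<epsilon>)))"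

end

theory Submission
  imports Defs
begin

text \<open>Suppose sensitivity fails for a small symmetric entourage \<epsilon>: the orbits of all points of
some open set U around x stay \<epsilon>-close to the orbit of x. Pick an almost periodic point z in U,
whose return times to U are syndetic with respect to a compact set K. Any point w is approached by
an orbit point t y with y \<in> U (transitivity), and some k \<in> K returns (k + t) z to U. Then
  (-k) x ~ t z ~ t x ~ t y ~ w,
each step within \<epsilon>, so w lies within \<epsilon> O \<epsilon> O \<epsilon> O \<epsilon> of the compact orbit piece (-K) x.
Choosing \<epsilon> O \<epsilon> O \<epsilon> O \<epsilon> inside an entourage that witnesses unboundedness gives a contradiction.\<close>

lemma entourage_relcomp_subset:
  assumes "entourage \<alpha>"
  obtains \<beta> where "entourage \<beta>" "\<beta> O \<beta> \<subseteq> \<alpha>"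
proof -
  obtain D where "eventually D uniformity" "\<And>x y z. D (x, y) \<Longrightarrow> D (y, z) \<Longrightarrow> (x, z) \<in> \<alpha>"
    using assms uniformity_transE unfolding entourage_def by blast
  then show ?thesis
    by (intro that[of "{p. D p}"]) (auto simp: entourage_def)
qed

lemma entourage_symmetric_subset:
  assumes "entourage \<alpha>"
  obtains \<beta> where "entourage \<beta>" "sym \<beta>" "\<beta> \<subseteq> \<alpha>"
proof
  have "eventually (\<lambda>(x, y). (y, x) \<in> \<alpha>) uniformity"
    using assms uniformity_sym unfolding entourage_def by blast
  from eventually_conj[OF assms[unfolded entourage_def] this]
  have "eventually (\<lambda>p. p \<in> \<alpha> \<and> (snd p, fst p) \<in> \<alpha>) uniformity"
    by (simp add: case_prod_beta)
  then show "entourage (\<alpha> \<inter> \<alpha>\<inverse>)"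
    unfolding entourage_def by (rule eventually_mono) auto
qed (auto intro: symI)

lemma entourage_symmetric_relcomp4_subset:
  assumes "entourage \<alpha>"
  obtains \<epsilon> where "entourage \<epsilon>" "sym \<epsilon>" "\<epsilon> O \<epsilon> O \<epsilon> O \<epsilon> \<subseteq> \<alpha>"
proof -
  obtain \<beta> where \<beta>: "entourage \<beta>" "\<beta> O \<beta> \<subseteq> \<alpha>"
    using assms entourage_relcomp_subset by blast
  obtain \<gamma> where \<gamma>: "entourage \<gamma>" "\<gamma> O \<gamma> \<subseteq> \<beta>"
    using \<beta>(1) entourage_relcomp_subset by blast
  obtain \<epsilon> where \<epsilon>: "entourage \<epsilon>" "sym \<epsilon>" "\<epsilon> \<subseteq> \<gamma>"
    using \<gamma>(1) entourage_symmetric_subset by blast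
  have "\<epsilon> O \<epsilon> \<subseteq> \<beta>"
    using \<epsilon>(3) \<gamma>(2) relcomp_mono by blast
  then have "(\<epsilon> O \<epsilon>) O (\<epsilon> O \<epsilon>) \<subseteq> \<alpha>"
    using \<beta>(2) relcomp_mono by blast
  then show ?thesis
    using that \<epsilon>(1,2) by (simp add: O_assoc)
qed

lemma entourage_eventually_nhds:
  assumes "entourage \<epsilon>"
  shows "eventually (\<lambda>y. (w, y) \<in> \<epsilon>) (nhds w)"
  unfolding eventually_nhds_uniformity
  using assms unfolding entourage_def by (rule eventually_mono) auto

lemma flow_act_cancel:
  assumes "is_flow act"
  shows "act (- k) (act (k + t) z) = act t z"
proof -
  have act_add: "act (s + r) y = act s (act r y)" for s r y
    using assms unfolding is_flow_def by blast
  have "act (- k) (act (k + t) z) = act (- k + (k + t)) z"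
    by (simp only: act_add)
  also have "\<dots> = act t z"
    by simp
  finally show ?thesis .
qed

lemma ap_point_return_times:
  assumes "ap_point act z" "open U" "z \<in> U"
  shows "\<exists>K. compact K \<and> (\<forall>t. \<exists>k\<in>K. act (k + t) z \<in> U)"
proof -
  have "syndetic {t. act t z \<in> U}"
    using assms unfolding ap_point_def by simp
  then obtain K where "compact K" and hit: "\<And>t. (\<lambda>k. k + t) ` K \<inter> {s. act s z \<in> U} \<noteq> {}"
    unfolding syndetic_def by auto
  moreover have "\<exists>k\<in>K. act (k + t) z \<in> U" for t
    using hit[of t] by auto
  ultimately show ?thesis
    by auto
qed

lemma M_flow_ap_point_in_open:
  assumes "M_flow act" "open U" "x \<in> U"
  shows "\<exists>z\<in>U. ap_point act z"
  using assms open_Int_closure_eq_empty[OF assms(2), of "{z. ap_point act z}"]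
  unfolding M_flow_def by blast

lemma top_transitive_hits:
  assumes "top_transitive act" "open U" "y \<in> U" "open V" "w \<in> V"
  shows "\<exists>t. \<exists>y'\<in>U. act t y' \<in> V"
  using assms unfolding top_transitive_def by blast

lemma M_flow_shadowed_orbit_covers:
  assumes "is_flow act" "M_flow act" "entourage \<epsilon>" "sym \<epsilon>"
    and "open U" "x \<in> U" and shadow: "\<And>y t. y \<in> U \<Longrightarrow> (act t x, act t y) \<in> \<epsilon>"
  shows "\<exists>K. compact K \<and> (\<epsilon> O \<epsilon> O \<epsilon> O \<epsilon>) `` ((\<lambda>k. act k x) ` K) = UNIV"
proof -
  obtain z where z: "z \<in> U" "ap_point act z"
    using M_flow_ap_point_in_open[OF assms(2,5,6)] by auto
  obtain K where K: "compact K" and ret: "\<forall>t. \<exists>k\<in>K. act (k + t) z \<in> U"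
    using ap_point_return_times[OF z(2) assms(5) z(1)] by blast
  have "(\<epsilon> O \<epsilon> O \<epsilon> O \<epsilon>) `` ((\<lambda>k. act k x) ` uminus ` K) = UNIV"
  proof (intro set_eqI iffI)
    fix w
    obtain V where V: "open V" "w \<in> V" "\<forall>y\<in>V. (w, y) \<in> \<epsilon>"
      using entourage_eventually_nhds[OF assms(3)] unfolding eventually_nhds by blast
    have "top_transitive act"
      using assms(2) unfolding M_flow_def by simp
    then obtain t y where y: "y \<in> U" "act t y \<in> V"
      using top_transitive_hits[OF _ assms(5,6) V(1,2)] by blast
    obtain k where k: "k \<in> K" "act (k + t) z \<in> U"
      using ret by auto
    have "(act (- k) x, act t z) \<in> \<epsilon>"
      using shadow[OF k(2), of "- k"] flow_act_cancel[OF assms(1)] by simp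
    moreover have "(act t z, act t x) \<in> \<epsilon>"
      using shadow[OF z(1)] assms(4) by (auto dest: symD)
    moreover have "(act t x, act t y) \<in> \<epsilon>"
      using shadow[OF y(1)] .
    moreover have "(act t y, w) \<in> \<epsilon>"
      using V(3) y(2) assms(4) by (auto dest: symD)
    ultimately have "(act (- k) x, w) \<in> \<epsilon> O \<epsilon> O \<epsilon> O \<epsilon>"
      by (meson relcompI)
    then show "w \<in> (\<epsilon> O \<epsilon> O \<epsilon> O \<epsilon>) `` ((\<lambda>k. act k x) ` uminus ` K)"
      using k(1) by (intro ImageI[of "act (- k) x"]) auto
  qed simp
  moreover have "compact (uminus ` K)"
    by (rule compact_continuous_image[OF _ K]) (intro continuous_intros)
  ultimately show ?thesis
    by blast
qed

theorem theorem4: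
  fixes act :: "'g::{topological_group_add, t2_space} \<Rightarrow> 'x::{uniform_space, t2_space} \<Rightarrow> 'x"
  assumes "is_flow act"
    and "M_flow act"
    and "\<not> bounded_flow act"
  shows "sensitive act"
proof -
  obtain \<alpha> where \<alpha>: "entourage \<alpha>"
    and not_covered: "\<forall>x0 K. compact K \<longrightarrow> \<alpha> `` ((\<lambda>k. act k x0) ` K) \<noteq> UNIV"
    using assms(3) unfolding bounded_flow_def by auto
  obtain \<epsilon> where \<epsilon>: "entourage \<epsilon>" "sym \<epsilon>" "\<epsilon> O \<epsilon> O \<epsilon> O \<epsilon> \<subseteq> \<alpha>"
    using \<alpha> entourage_symmetric_relcomp4_subset by blast
  show ?thesis
  proof (rule ccontr)
    assume "\<not> sensitive act"
    then obtain x U where U: "open U" "x \<in> U"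
      and shadow: "\<And>y t. y \<in> U \<Longrightarrow> (act t x, act t y) \<in> \<epsilon>"
      using \<epsilon>(1) unfolding sensitive_def by auto
    obtain K where K: "compact K" and covered: "(\<epsilon> O \<epsilon> O \<epsilon> O \<epsilon>) `` ((\<lambda>k. act k x) ` K) = UNIV"
      using M_flow_shadowed_orbit_covers[OF assms(1,2) \<epsilon>(1,2) U shadow] by blast
    have "(\<epsilon> O \<epsilon> O \<epsilon> O \<epsilon>) `` ((\<lambda>k. act k x) ` K) \<subseteq> \<alpha> `` ((\<lambda>k. act k x) ` K)"
      using \<epsilon>(3) by (rule Image_mono) simp
    then have "\<alpha> `` ((\<lambda>k. act k x) ` K) = UNIV"
      unfolding covered by (rule top_le)
    with not_covered K show False
      by auto
  qed
qed

end
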